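(* Let $P:\mathcal{C}^{\mathrm{op}}\to\mathbf{Pos}$ be a slat-doctrine such that every fibre $P(A)$ has finite joins and every reindexing map $P_f$ preserves them. Then every fibre $P^{un}(A)$ of the universal completion has finite joins and every reindexing map $P^{un}_f$ preserves them.
   Context: A slat-doctrine is a functor $P:\mathcal{C}^{\mathrm{op}}\to\mathbf{Pos}$ with $\mathcal{C}$ having finite products; $P_f:P(Y)\to P(X)$ is reindexing along $f:X\to Y$. Universal completion: $P^{un}(A)$ is the poset (reflection of the preorder) of triples $(A,B,\alpha)$ with $\alpha\in P(A\times B)$, where $(A,B,\alpha)\le(A,C,\beta)$ iff there is $g:A\times C\to B$ with $P_{\langle\mathrm{pr}_A,g\rangle}(\alpha)\le\beta$; for $f:A\to C$, $P^{un}_f(C,D,\gamma)=(A,D,P_{f\times 1_D}(\gamma))$. *)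

theory Defs
  imports Main
begin

(* A category whose objects are all elements of type 'o and whose arrows are all
   elements of type 'a, equipped with chosen finite products (terminal object and
   binary products with projections).  Composition: ccomp g f = g o f (defined when
   ccod f = cdom g). *)
record ('o, 'a) fpcat =
  cdom  :: "'a \<Rightarrow> 'o"
  ccod  :: "'a \<Rightarrow> 'o"
  ccomp :: "'a \<Rightarrow> 'a \<Rightarrow> 'a"
  cid   :: "'o \<Rightarrow> 'a"
  cterm :: "'o"
  cprod :: "'o \<Rightarrow> 'o \<Rightarrow> 'o"
  cpr1  :: "'o \<Rightarrow> 'o \<Rightarrow> 'a"
  cpr2  :: "'o \<Rightarrow> 'o \<Rightarrow> 'a"

definition is_fp_category :: "('o, 'a) fpcat \<Rightarrow> bool" where
  "is_fp_category C \<longleftrightarrow>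
     (\<forall>A. cdom C (cid C A) = A \<and> ccod C (cid C A) = A)
   \<and> (\<forall>f g. ccod C f = cdom C g \<longrightarrow>
          cdom C (ccomp C g f) = cdom C f \<and> ccod C (ccomp C g f) = ccod C g)
   \<and> (\<forall>f. ccomp C f (cid C (cdom C f)) = f \<and> ccomp C (cid C (ccod C f)) f = f)
   \<and> (\<forall>f g h. ccod C f = cdom C g \<and> ccod C g = cdom C h \<longrightarrow>
          ccomp C h (ccomp C g f) = ccomp C (ccomp C h g) f)
   \<and> (\<forall>A. \<exists>!t. cdom C t = A \<and> ccod C t = cterm C)
   \<and> (\<forall>A B. cdom C (cpr1 C A B) = cprod C A B \<and> ccod C (cpr1 C A B) = A
          \<and> cdom C (cpr2 C A B) = cprod C A B \<and> ccod C (cpr2 C A B) = B)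
   \<and> (\<forall>f g. cdom C f = cdom C g \<longrightarrow>
          (\<exists>!h. cdom C h = cdom C f \<and> ccod C h = cprod C (ccod C f) (ccod C g)
               \<and> ccomp C (cpr1 C (ccod C f) (ccod C g)) h = f
               \<and> ccomp C (cpr2 C (ccod C f) (ccod C g)) h = g))"

definition cpair :: "('o, 'a) fpcat \<Rightarrow> 'a \<Rightarrow> 'a \<Rightarrow> 'a" where
  "cpair C f g = (THE h. cdom C h = cdom C f \<and> ccod C h = cprod C (ccod C f) (ccod C g)
               \<and> ccomp C (cpr1 C (ccod C f) (ccod C g)) h = f
               \<and> ccomp C (cpr2 C (ccod C f) (ccod C g)) h = g)"

definition ctimes_id :: "('o, 'a) fpcat \<Rightarrow> 'a \<Rightarrow> 'o \<Rightarrow> 'a" where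
  "ctimes_id C f D = cpair C (ccomp C f (cpr1 C (cdom C f) D)) (cpr2 C (cdom C f) D)"

(* A slat-doctrine P : C^op \<rightarrow> Pos, given by fibre carriers Pc A, fibre orders le A
   and reindexing maps rx f : P(cod f) \<rightarrow> P(dom f). *)
definition is_doctrine ::
  "('o, 'a) fpcat \<Rightarrow> ('o \<Rightarrow> 'e set) \<Rightarrow> ('o \<Rightarrow> 'e \<Rightarrow> 'e \<Rightarrow> bool) \<Rightarrow> ('a \<Rightarrow> 'e \<Rightarrow> 'e) \<Rightarrow> bool"
where
  "is_doctrine C Pc le rx \<longleftrightarrow>
     (\<forall>A. (\<forall>x\<in>Pc A. le A x x)
        \<and> (\<forall>x\<in>Pc A. \<forall>y\<in>Pc A. le A x y \<and> le A y x \<longrightarrow> x = y)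
        \<and> (\<forall>x\<in>Pc A. \<forall>y\<in>Pc A. \<forall>z\<in>Pc A. le A x y \<and> le A y z \<longrightarrow> le A x z))
   \<and> (\<forall>f. \<forall>x\<in>Pc (ccod C f). rx f x \<in> Pc (cdom C f))
   \<and> (\<forall>f. \<forall>x\<in>Pc (ccod C f). \<forall>y\<in>Pc (ccod C f).
          le (ccod C f) x y \<longrightarrow> le (cdom C f) (rx f x) (rx f y))
   \<and> (\<forall>A. \<forall>x\<in>Pc A. rx (cid C A) x = x)
   \<and> (\<forall>f g. ccod C f = cdom C g \<longrightarrow>
          (\<forall>x\<in>Pc (ccod C g). rx (ccomp C g f) x = rx f (rx g x)))"

definition is_lub :: "'x set \<Rightarrow> ('x \<Rightarrow> 'x \<Rightarrow> bool) \<Rightarrow> 'x set \<Rightarrow> 'x \<Rightarrow> bool" where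
  "is_lub car le S j \<longleftrightarrow> j \<in> car \<and> (\<forall>x\<in>S. le x j)
     \<and> (\<forall>u\<in>car. (\<forall>x\<in>S. le x u) \<longrightarrow> le j u)"

definition has_finite_joins :: "'x set \<Rightarrow> ('x \<Rightarrow> 'x \<Rightarrow> bool) \<Rightarrow> bool" where
  "has_finite_joins car le \<longleftrightarrow> (\<forall>S. finite S \<and> S \<subseteq> car \<longrightarrow> (\<exists>j. is_lub car le S j))"

definition preserves_finite_joins ::
  "'x set \<Rightarrow> ('x \<Rightarrow> 'x \<Rightarrow> bool) \<Rightarrow> 'y set \<Rightarrow> ('y \<Rightarrow> 'y \<Rightarrow> bool) \<Rightarrow> ('x \<Rightarrow> 'y) \<Rightarrow> bool" where
  "preserves_finite_joins car le car' le' h \<longleftrightarrow>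
     (\<forall>S j. finite S \<and> S \<subseteq> car \<and> is_lub car le S j \<longrightarrow> is_lub car' le' (h ` S) (h j))"

(* Universal completion.  A triple (A,B,\<alpha>) of P^un(A) is represented by the pair (B,\<alpha>). *)
definition un_raw :: "('o, 'a) fpcat \<Rightarrow> ('o \<Rightarrow> 'e set) \<Rightarrow> 'o \<Rightarrow> ('o \<times> 'e) set" where
  "un_raw C Pc A = {(B, \<alpha>). \<alpha> \<in> Pc (cprod C A B)}"

definition un_pre ::
  "('o, 'a) fpcat \<Rightarrow> ('o \<Rightarrow> 'e \<Rightarrow> 'e \<Rightarrow> bool) \<Rightarrow> ('a \<Rightarrow> 'e \<Rightarrow> 'e) \<Rightarrow> 'o \<Rightarrow> 'o \<times> 'e \<Rightarrow> 'o \<times> 'e \<Rightarrow> bool"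
where
  "un_pre C le rx A x y \<longleftrightarrow>
     (\<exists>g. cdom C g = cprod C A (fst y) \<and> ccod C g = fst x
        \<and> le (cprod C A (fst y)) (rx (cpair C (cpr1 C A (fst y)) g) (snd x)) (snd y))"

definition un_equiv ::
  "('o, 'a) fpcat \<Rightarrow> ('o \<Rightarrow> 'e \<Rightarrow> 'e \<Rightarrow> bool) \<Rightarrow> ('a \<Rightarrow> 'e \<Rightarrow> 'e) \<Rightarrow> 'o \<Rightarrow> 'o \<times> 'e \<Rightarrow> 'o \<times> 'e \<Rightarrow> bool"
where
  "un_equiv C le rx A x y \<longleftrightarrow> un_pre C le rx A x y \<and> un_pre C le rx A y x"

definition un_class ::
  "('o, 'a) fpcat \<Rightarrow> ('o \<Rightarrow> 'e set) \<Rightarrow> ('o \<Rightarrow> 'e \<Rightarrow> 'e \<Rightarrow> bool) \<Rightarrow> ('a \<Rightarrow> 'e \<Rightarrow> 'e) \<Rightarrow> 'o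
     \<Rightarrow> 'o \<times> 'e \<Rightarrow> ('o \<times> 'e) set"
where
  "un_class C Pc le rx A x = {y \<in> un_raw C Pc A. un_equiv C le rx A x y}"

definition Pun ::
  "('o, 'a) fpcat \<Rightarrow> ('o \<Rightarrow> 'e set) \<Rightarrow> ('o \<Rightarrow> 'e \<Rightarrow> 'e \<Rightarrow> bool) \<Rightarrow> ('a \<Rightarrow> 'e \<Rightarrow> 'e) \<Rightarrow> 'o
     \<Rightarrow> ('o \<times> 'e) set set"
where
  "Pun C Pc le rx A = un_class C Pc le rx A ` un_raw C Pc A"

definition Pun_le ::
  "('o, 'a) fpcat \<Rightarrow> ('o \<Rightarrow> 'e \<Rightarrow> 'e \<Rightarrow> bool) \<Rightarrow> ('a \<Rightarrow> 'e \<Rightarrow> 'e) \<Rightarrow> 'o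
     \<Rightarrow> ('o \<times> 'e) set \<Rightarrow> ('o \<times> 'e) set \<Rightarrow> bool"
where
  "Pun_le C le rx A X Y \<longleftrightarrow> (\<exists>x\<in>X. \<exists>y\<in>Y. un_pre C le rx A x y)"

definition Pun_map ::
  "('o, 'a) fpcat \<Rightarrow> ('o \<Rightarrow> 'e set) \<Rightarrow> ('o \<Rightarrow> 'e \<Rightarrow> 'e \<Rightarrow> bool) \<Rightarrow> ('a \<Rightarrow> 'e \<Rightarrow> 'e) \<Rightarrow> 'a
     \<Rightarrow> ('o \<times> 'e) set \<Rightarrow> ('o \<times> 'e) set"
where
  "Pun_map C Pc le rx f Y =
     {z \<in> un_raw C Pc (cdom C f). \<exists>(D, \<gamma>)\<in>Y.
        un_equiv C le rx (cdom C f) (D, rx (ctimes_id C f D) \<gamma>) z}"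

end

theory Submission
  imports Defs
begin

text \<open>
  \<open>P\<^sup>u\<^sup>n(A)\<close> is the poset reflection of the preorder of triples \<open>(A, B, \<alpha>)\<close>, and finite joins
  as well as their preservation pass from a preorder to its reflection. In the preorder, a
  least element is \<open>(A, 1, \<bottom>)\<close>, and a join of \<open>(A, B, \<alpha>)\<close> and \<open>(A, D, \<beta>)\<close> is
  \<open>(A, B \<times> D, P\<^bsub>1\<times>\<pi>\<^sub>1\<^esub>(\<alpha>) \<or> P\<^bsub>1\<times>\<pi>\<^sub>2\<^esub>(\<beta>))\<close>: an upper bound \<open>(A, E, \<delta>)\<close> comes with
  \<open>g\<^sub>1 : A \<times> E \<rightarrow> B\<close> and \<open>g\<^sub>2 : A \<times> E \<rightarrow> D\<close>, and reindexing the join along \<open>\<langle>pr\<^sub>A, \<langle>g\<^sub>1, g\<^sub>2\<rangle>\<rangle>\<close>,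
  which preserves it, bounds it by \<open>\<delta>\<close>. Since \<open>f \<times> 1\<close> commutes with \<open>1 \<times> \<pi>\<^sub>i\<close> and \<open>P\<^sub>f\<close> preserves
  joins, \<open>P\<^sup>u\<^sup>n\<^sub>f\<close> maps these canonical joins to canonical joins; a finite join is built
  from the least element and binary joins, so this suffices.
\<close>

section \<open>Finite joins in a preorder and in its poset reflection\<close>

definition reflection_class :: "'x set \<Rightarrow> ('x \<Rightarrow> 'x \<Rightarrow> bool) \<Rightarrow> 'x \<Rightarrow> 'x set" where
  "reflection_class X R x = {y \<in> X. R x y \<and> R y x}"

definition reflection_le :: "('x \<Rightarrow> 'x \<Rightarrow> bool) \<Rightarrow> 'x set \<Rightarrow> 'x set \<Rightarrow> bool" where
  "reflection_le R P Q \<longleftrightarrow> (\<exists>x\<in>P. \<exists>y\<in>Q. R x y)"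

locale carrier_preorder =
  fixes X :: "'x set" and R :: "'x \<Rightarrow> 'x \<Rightarrow> bool"
  assumes refl: "x \<in> X \<Longrightarrow> R x x"
    and trans: "x \<in> X \<Longrightarrow> y \<in> X \<Longrightarrow> z \<in> X \<Longrightarrow> R x y \<Longrightarrow> R y z \<Longrightarrow> R x z"
begin

abbreviation cls :: "'x \<Rightarrow> 'x set" where
  "cls \<equiv> reflection_class X R"

lemma mem_reflection_class: "x \<in> X \<Longrightarrow> x \<in> cls x"
  by (simp add: reflection_class_def refl)

lemma reflection_le_class_iff:
  assumes "x \<in> X" "y \<in> X"
  shows "reflection_le R (cls x) (cls y) \<longleftrightarrow> R x y"
proof
  assume "reflection_le R (cls x) (cls y)"
  then obtain x' y' where "x' \<in> X" "y' \<in> X" "R x x'" "R x' y'" "R y' y"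
    unfolding reflection_le_def reflection_class_def by blast
  then show "R x y"
    using assms trans[of x x' y'] trans[of x y' y] by blast
next
  assume "R x y"
  then show "reflection_le R (cls x) (cls y)"
    using assms mem_reflection_class unfolding reflection_le_def by blast
qed

lemma is_lub_equiv:
  assumes j: "is_lub X R S j" and "S \<subseteq> X" "j' \<in> X" "R j j'" "R j' j"
  shows "is_lub X R S j'"
proof -
  have "j \<in> X"
    using j by (simp add: is_lub_def)
  then show ?thesis
    using assms trans[of _ j j'] trans[of j' j] unfolding is_lub_def by blast
qed

lemma is_lub_insert_iff:
  assumes "S \<subseteq> X" and j\<^sub>0: "is_lub X R S j\<^sub>0"
  shows "is_lub X R (insert a S) j \<longleftrightarrow> is_lub X R {a, j\<^sub>0} j"
proof -
  have "(\<forall>x\<in>S. R x u) \<longleftrightarrow> R j\<^sub>0 u" if "u \<in> X" for u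
  proof
    show "\<forall>x\<in>S. R x u \<Longrightarrow> R j\<^sub>0 u"
      using j\<^sub>0 that by (simp add: is_lub_def)
    show "R j\<^sub>0 u \<Longrightarrow> \<forall>x\<in>S. R x u"
      using j\<^sub>0 that assms(1) trans[of _ j\<^sub>0 u] by (auto simp: is_lub_def)
  qed
  then show ?thesis
    unfolding is_lub_def by auto
qed

lemma has_finite_joinsI:
  assumes "\<exists>b. is_lub X R {} b"
    and "\<And>a c. a \<in> X \<Longrightarrow> c \<in> X \<Longrightarrow> \<exists>j. is_lub X R {a, c} j"
  shows "has_finite_joins X R"
  unfolding has_finite_joins_def
proof (intro allI impI, elim conjE)
  fix S assume "finite S" "S \<subseteq> X"
  then show "\<exists>j. is_lub X R S j"
  proof (induction S rule: finite_induct)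
    case empty
    from assms(1) show ?case .
  next
    case (insert a S)
    then obtain j\<^sub>0 where j\<^sub>0: "is_lub X R S j\<^sub>0" by auto
    then have "j\<^sub>0 \<in> X" by (simp add: is_lub_def)
    with insert.prems obtain j where "is_lub X R {a, j\<^sub>0} j" using assms(2) by blast
    then show ?case using is_lub_insert_iff j\<^sub>0 insert.prems by blast
  qed
qed

lemma is_lub_reflection_iff:
  assumes "S \<subseteq> X" "j \<in> X"
  shows "is_lub (cls ` X) (reflection_le R) (cls ` S) (cls j) \<longleftrightarrow> is_lub X R S j"
  using assms by (auto simp: is_lub_def reflection_le_class_iff subset_iff)

lemma has_finite_joins_reflection:
  assumes "has_finite_joins X R"
  shows "has_finite_joins (cls ` X) (reflection_le R)"
  unfolding has_finite_joins_def
proof (intro allI impI, elim conjE)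
  fix S' assume "finite S'" "S' \<subseteq> cls ` X"
  then obtain S where S: "S \<subseteq> X" "finite S" "S' = cls ` S"
    by (meson finite_subset_image)
  with assms obtain j where "is_lub X R S j"
    unfolding has_finite_joins_def by blast
  then have "is_lub (cls ` X) (reflection_le R) S' (cls j)"
    using is_lub_reflection_iff S by (simp add: is_lub_def)
  then show "\<exists>J. is_lub (cls ` X) (reflection_le R) S' J" ..
qed

end

lemma preserves_finite_joinsI:
  assumes X: "carrier_preorder X R" and Y: "carrier_preorder Y Q"
    and joins: "has_finite_joins X R"
    and closed: "m ` X \<subseteq> Y"
    and bot: "\<And>b. is_lub X R {} b \<Longrightarrow> is_lub Y Q {} (m b)"
    and binary: "\<And>a c j. a \<in> X \<Longrightarrow> c \<in> X \<Longrightarrow> is_lub X R {a, c} j \<Longrightarrow> is_lub Y Q {m a, m c} (m j)"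
  shows "preserves_finite_joins X R Y Q m"
proof -
  have "is_lub Y Q (m ` S) (m j)" if "finite S" "S \<subseteq> X" "is_lub X R S j" for S j
    using that
  proof (induction S arbitrary: j rule: finite_induct)
    case empty
    then show ?case using bot by simp
  next
    case (insert a S)
    obtain j\<^sub>0 where j\<^sub>0: "is_lub X R S j\<^sub>0"
      using joins insert unfolding has_finite_joins_def by blast
    then have "is_lub X R {a, j\<^sub>0} j"
      using carrier_preorder.is_lub_insert_iff[OF X] insert by blast
    moreover have "j\<^sub>0 \<in> X"
      using j\<^sub>0 by (simp add: is_lub_def)
    ultimately have "is_lub Y Q {m a, m j\<^sub>0} (m j)"
      using binary insert.prems by blast
    moreover have "is_lub Y Q (m ` S) (m j\<^sub>0)"
      using insert j\<^sub>0 by blast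
    moreover have "m ` S \<subseteq> Y"
      using closed insert.prems by blast
    ultimately show ?case
      using carrier_preorder.is_lub_insert_iff[OF Y] by simp
  qed
  then show ?thesis unfolding preserves_finite_joins_def by blast
qed

lemma preserves_finite_joins_reflection:
  assumes X: "carrier_preorder X R" and Y: "carrier_preorder Y Q"
    and m: "preserves_finite_joins X R Y Q m" "m ` X \<subseteq> Y"
    and H: "\<And>x. x \<in> X \<Longrightarrow> H (reflection_class X R x) = reflection_class Y Q (m x)"
  shows "preserves_finite_joins (reflection_class X R ` X) (reflection_le R)
           (reflection_class Y Q ` Y) (reflection_le Q) H"
  unfolding preserves_finite_joins_def
proof (intro allI impI, elim conjE)
  fix S' J
  assume "finite S'" "S' \<subseteq> reflection_class X R ` X"
    and lub: "is_lub (reflection_class X R ` X) (reflection_le R) S' J"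
  then obtain S where S: "S \<subseteq> X" "finite S" "S' = reflection_class X R ` S"
    by (meson finite_subset_image)
  obtain j where j: "j \<in> X" "J = reflection_class X R j"
    using lub by (auto simp: is_lub_def)
  have "is_lub X R S j"
    using carrier_preorder.is_lub_reflection_iff[OF X S(1) j(1)] lub S j by simp
  then have "is_lub Y Q (m ` S) (m j)"
    using m S unfolding preserves_finite_joins_def by blast
  moreover have "m ` S \<subseteq> Y" "m j \<in> Y"
    using S(1) j(1) m(2) by auto
  ultimately have "is_lub (reflection_class Y Q ` Y) (reflection_le Q)
               (reflection_class Y Q ` m ` S) (reflection_class Y Q (m j))"
    using carrier_preorder.is_lub_reflection_iff[OF Y] by simp
  moreover have "H ` S' = reflection_class Y Q ` m ` S"
    unfolding S(3) image_image using S(1) H by (intro image_cong) auto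
  ultimately show "is_lub (reflection_class Y Q ` Y) (reflection_le Q) (H ` S') (H J)"
    using H j by simp
qed

lemma monotone_is_lub_cong:
  assumes Y: "carrier_preorder Y Q"
    and mono: "\<And>x y. x \<in> X \<Longrightarrow> y \<in> X \<Longrightarrow> R x y \<Longrightarrow> Q (m x) (m y)"
    and closed: "m ` X \<subseteq> Y" "T \<subseteq> X"
    and j: "is_lub X R T j" and j': "is_lub X R T j'" and mj': "is_lub Y Q (m ` T) (m j')"
  shows "is_lub Y Q (m ` T) (m j)"
proof -
  have "j \<in> X" "j' \<in> X" "R j j'" "R j' j"
    using j j' unfolding is_lub_def by blast+
  then have "m j \<in> Y" "Q (m j') (m j)" "Q (m j) (m j')"
    using closed mono by auto
  moreover have "m ` T \<subseteq> Y"
    using closed by blast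
  ultimately show ?thesis
    using carrier_preorder.is_lub_equiv[OF Y mj'] by simp
qed

lemma reflection_class_of_image:
  assumes X: "carrier_preorder X R" and Y: "carrier_preorder Y Q"
    and mono: "\<And>x y. x \<in> X \<Longrightarrow> y \<in> X \<Longrightarrow> R x y \<Longrightarrow> Q (m x) (m y)"
    and closed: "m ` X \<subseteq> Y" and x: "x \<in> X"
  shows "{z \<in> Y. \<exists>y\<in>reflection_class X R x. Q (m y) z \<and> Q z (m y)} = reflection_class Y Q (m x)"
proof -
  have "(\<exists>y\<in>reflection_class X R x. Q (m y) z \<and> Q z (m y)) \<longleftrightarrow> Q (m x) z \<and> Q z (m x)"
    if z: "z \<in> Y" for z
  proof
    assume "\<exists>y\<in>reflection_class X R x. Q (m y) z \<and> Q z (m y)"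
    then obtain y where y: "y \<in> X" "R x y" "R y x" and yz: "Q (m y) z" "Q z (m y)"
      unfolding reflection_class_def by blast
    have "m x \<in> Y" "m y \<in> Y" "Q (m x) (m y)" "Q (m y) (m x)"
      using closed mono x y by auto
    then show "Q (m x) z \<and> Q z (m x)"
      using carrier_preorder.trans[OF Y, of "m x" "m y" z] carrier_preorder.trans[OF Y, of z "m y" "m x"]
        z yz by blast
  next
    assume "Q (m x) z \<and> Q z (m x)"
    then show "\<exists>y\<in>reflection_class X R x. Q (m y) z \<and> Q z (m y)"
      using carrier_preorder.mem_reflection_class[OF X x] by blast
  qed
  then show ?thesis
    unfolding reflection_class_def[of Y] by auto
qed

section \<open>Categories with finite products\<close>

locale fp_category =
  fixes C :: "('o, 'a) fpcat"
  assumes fp_category: "is_fp_category C"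
begin

abbreviation cat_comp :: "'a \<Rightarrow> 'a \<Rightarrow> 'a"  (infixr "\<cdot>" 55) where
  "g \<cdot> f \<equiv> ccomp C g f"

abbreviation cat_prod :: "'o \<Rightarrow> 'o \<Rightarrow> 'o"  (infixr "\<times>\<^sub>c" 80) where
  "A \<times>\<^sub>c B \<equiv> cprod C A B"

abbreviation cat_pair :: "'a \<Rightarrow> 'a \<Rightarrow> 'a"  ("\<langle>_, _\<rangle>") where
  "\<langle>f, g\<rangle> \<equiv> cpair C f g"

abbreviation "p\<^sub>1 \<equiv> cpr1 C"
abbreviation "p\<^sub>2 \<equiv> cpr2 C"

lemma fp_category_structure:
  "\<forall>A. cdom C (cid C A) = A \<and> ccod C (cid C A) = A"
  "\<forall>f g. ccod C f = cdom C g \<longrightarrow> cdom C (g \<cdot> f) = cdom C f \<and> ccod C (g \<cdot> f) = ccod C g"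
  "\<forall>f. f \<cdot> cid C (cdom C f) = f \<and> cid C (ccod C f) \<cdot> f = f"
  "\<forall>f g h. ccod C f = cdom C g \<and> ccod C g = cdom C h \<longrightarrow> h \<cdot> g \<cdot> f = (h \<cdot> g) \<cdot> f"
  "\<forall>A. \<exists>!t. cdom C t = A \<and> ccod C t = cterm C"
  "\<forall>A B. cdom C (p\<^sub>1 A B) = A \<times>\<^sub>c B \<and> ccod C (p\<^sub>1 A B) = A
     \<and> cdom C (p\<^sub>2 A B) = A \<times>\<^sub>c B \<and> ccod C (p\<^sub>2 A B) = B"
  "\<forall>f g. cdom C f = cdom C g \<longrightarrow>
     (\<exists>!h. cdom C h = cdom C f \<and> ccod C h = ccod C f \<times>\<^sub>c ccod C g
        \<and> p\<^sub>1 (ccod C f) (ccod C g) \<cdot> h = f \<and> p\<^sub>2 (ccod C f) (ccod C g) \<cdot> h = g)"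
  using fp_category unfolding is_fp_category_def by simp_all

lemma dom_cod_id [simp]: "cdom C (cid C A) = A" "ccod C (cid C A) = A"
  using fp_category_structure(1) by simp_all

lemma dom_cod_comp [simp]:
  "ccod C f = cdom C g \<Longrightarrow> cdom C (g \<cdot> f) = cdom C f"
  "ccod C f = cdom C g \<Longrightarrow> ccod C (g \<cdot> f) = ccod C g"
  using fp_category_structure(2) by simp_all

lemma comp_id_right [simp]: "cdom C f = A \<Longrightarrow> f \<cdot> cid C A = f"
  using fp_category_structure(3) by blast

lemma comp_assoc [simp]:
  "ccod C f = cdom C g \<Longrightarrow> ccod C g = cdom C h \<Longrightarrow> (h \<cdot> g) \<cdot> f = h \<cdot> g \<cdot> f"
  using fp_category_structure(4) by simp

lemma dom_cod_proj [simp]: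
  "cdom C (p\<^sub>1 A B) = A \<times>\<^sub>c B" "ccod C (p\<^sub>1 A B) = A"
  "cdom C (p\<^sub>2 A B) = A \<times>\<^sub>c B" "ccod C (p\<^sub>2 A B) = B"
  using fp_category_structure(6) by simp_all

lemma ex_to_terminal: "\<exists>t. cdom C t = A \<and> ccod C t = cterm C"
  using fp_category_structure(5) by blast

lemma pair_universal:
  assumes "cdom C f = cdom C g"
  shows "\<exists>!h. cdom C h = cdom C f \<and> ccod C h = ccod C f \<times>\<^sub>c ccod C g
           \<and> p\<^sub>1 (ccod C f) (ccod C g) \<cdot> h = f \<and> p\<^sub>2 (ccod C f) (ccod C g) \<cdot> h = g"
  using fp_category_structure(7) assms by blast

lemma pair_spec:
  assumes "cdom C f = cdom C g"
  shows "cdom C \<langle>f, g\<rangle> = cdom C f \<and> ccod C \<langle>f, g\<rangle> = ccod C f \<times>\<^sub>c ccod C g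
           \<and> p\<^sub>1 (ccod C f) (ccod C g) \<cdot> \<langle>f, g\<rangle> = f \<and> p\<^sub>2 (ccod C f) (ccod C g) \<cdot> \<langle>f, g\<rangle> = g"
  using theI'[OF pair_universal[OF assms]] unfolding cpair_def .

lemma dom_cod_pair [simp]:
  "cdom C f = cdom C g \<Longrightarrow> cdom C \<langle>f, g\<rangle> = cdom C f"
  "cdom C f = cdom C g \<Longrightarrow> ccod C \<langle>f, g\<rangle> = ccod C f \<times>\<^sub>c ccod C g"
  using pair_spec by blast+

lemma proj_comp_pair [simp]:
  "cdom C f = cdom C g \<Longrightarrow> ccod C f = A \<Longrightarrow> ccod C g = B \<Longrightarrow> p\<^sub>1 A B \<cdot> \<langle>f, g\<rangle> = f"
  "cdom C f = cdom C g \<Longrightarrow> ccod C f = A \<Longrightarrow> ccod C g = B \<Longrightarrow> p\<^sub>2 A B \<cdot> \<langle>f, g\<rangle> = g"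
  using pair_spec by blast+

lemma pair_unique:
  assumes "cdom C f = cdom C g" "cdom C h = cdom C f" "ccod C h = ccod C f \<times>\<^sub>c ccod C g"
    and "p\<^sub>1 (ccod C f) (ccod C g) \<cdot> h = f" "p\<^sub>2 (ccod C f) (ccod C g) \<cdot> h = g"
  shows "h = \<langle>f, g\<rangle>"
  using pair_universal[OF assms(1)] pair_spec[OF assms(1)] assms(2-) by blast

lemma comp_pair [simp]:
  assumes "cdom C f = cdom C g" "ccod C k = cdom C f"
  shows "\<langle>f, g\<rangle> \<cdot> k = \<langle>f \<cdot> k, g \<cdot> k\<rangle>"
proof (rule pair_unique)
  have "p\<^sub>1 (ccod C f) (ccod C g) \<cdot> \<langle>f, g\<rangle> \<cdot> k = (p\<^sub>1 (ccod C f) (ccod C g) \<cdot> \<langle>f, g\<rangle>) \<cdot> k"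
    using assms by (simp del: proj_comp_pair)
  also have "\<dots> = f \<cdot> k"
    using assms by simp
  finally show "p\<^sub>1 (ccod C (f \<cdot> k)) (ccod C (g \<cdot> k)) \<cdot> \<langle>f, g\<rangle> \<cdot> k = f \<cdot> k"
    using assms by simp
  have "p\<^sub>2 (ccod C f) (ccod C g) \<cdot> \<langle>f, g\<rangle> \<cdot> k = (p\<^sub>2 (ccod C f) (ccod C g) \<cdot> \<langle>f, g\<rangle>) \<cdot> k"
    using assms by (simp del: proj_comp_pair)
  also have "\<dots> = g \<cdot> k"
    using assms by simp
  finally show "p\<^sub>2 (ccod C (f \<cdot> k)) (ccod C (g \<cdot> k)) \<cdot> \<langle>f, g\<rangle> \<cdot> k = g \<cdot> k"
    using assms by simp
qed (use assms in simp_all)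

lemma pair_proj: "\<langle>p\<^sub>1 A B, p\<^sub>2 A B\<rangle> = cid C (A \<times>\<^sub>c B)"
  using pair_unique[of "p\<^sub>1 A B" "p\<^sub>2 A B" "cid C (A \<times>\<^sub>c B)"] by simp

lemma dom_cod_ctimes_id [simp]:
  "cdom C (ctimes_id C f D) = cdom C f \<times>\<^sub>c D" "ccod C (ctimes_id C f D) = ccod C f \<times>\<^sub>c D"
  by (simp_all add: ctimes_id_def)

definition id_times_fst :: "'o \<Rightarrow> 'o \<Rightarrow> 'o \<Rightarrow> 'a" where
  "id_times_fst A B D = \<langle>p\<^sub>1 A (B \<times>\<^sub>c D), p\<^sub>1 B D \<cdot> p\<^sub>2 A (B \<times>\<^sub>c D)\<rangle>"

definition id_times_snd :: "'o \<Rightarrow> 'o \<Rightarrow> 'o \<Rightarrow> 'a" where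
  "id_times_snd A B D = \<langle>p\<^sub>1 A (B \<times>\<^sub>c D), p\<^sub>2 B D \<cdot> p\<^sub>2 A (B \<times>\<^sub>c D)\<rangle>"

lemma dom_cod_id_times_fst_snd [simp]:
  "cdom C (id_times_fst A B D) = A \<times>\<^sub>c B \<times>\<^sub>c D" "ccod C (id_times_fst A B D) = A \<times>\<^sub>c B"
  "cdom C (id_times_snd A B D) = A \<times>\<^sub>c B \<times>\<^sub>c D" "ccod C (id_times_snd A B D) = A \<times>\<^sub>c D"
  by (simp_all add: id_times_fst_def id_times_snd_def)

lemma id_times_fst_natural:
  "id_times_fst (ccod C f) B D \<cdot> ctimes_id C f (B \<times>\<^sub>c D) = ctimes_id C f B \<cdot> id_times_fst (cdom C f) B D"
  by (simp add: id_times_fst_def ctimes_id_def)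

lemma id_times_snd_natural:
  "id_times_snd (ccod C f) B D \<cdot> ctimes_id C f (B \<times>\<^sub>c D) = ctimes_id C f D \<cdot> id_times_snd (cdom C f) B D"
  by (simp add: id_times_snd_def ctimes_id_def)

end

section \<open>The universal completion\<close>

locale slat_doctrine = fp_category C
  for C :: "('o, 'a) fpcat" +
  fixes Pc :: "'o \<Rightarrow> 'e set" and le :: "'o \<Rightarrow> 'e \<Rightarrow> 'e \<Rightarrow> bool" and rx :: "'a \<Rightarrow> 'e \<Rightarrow> 'e"
  assumes doctrine: "is_doctrine C Pc le rx"
begin

lemma le_refl: "x \<in> Pc A \<Longrightarrow> le A x x"
  using doctrine unfolding is_doctrine_def by blast

lemma le_trans: "x \<in> Pc A \<Longrightarrow> y \<in> Pc A \<Longrightarrow> z \<in> Pc A \<Longrightarrow> le A x y \<Longrightarrow> le A y z \<Longrightarrow> le A x z"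
  using doctrine unfolding is_doctrine_def by blast

lemma rx_closed: "x \<in> Pc (ccod C f) \<Longrightarrow> rx f x \<in> Pc (cdom C f)"
  using doctrine unfolding is_doctrine_def by blast

lemma rx_mono:
  "x \<in> Pc (ccod C f) \<Longrightarrow> y \<in> Pc (ccod C f) \<Longrightarrow> le (ccod C f) x y \<Longrightarrow> le (cdom C f) (rx f x) (rx f y)"
  using doctrine unfolding is_doctrine_def by blast

lemma rx_id: "x \<in> Pc A \<Longrightarrow> rx (cid C A) x = x"
  using doctrine unfolding is_doctrine_def by blast

lemma rx_comp: "ccod C f = cdom C g \<Longrightarrow> x \<in> Pc (ccod C g) \<Longrightarrow> rx (g \<cdot> f) x = rx f (rx g x)"
  using doctrine unfolding is_doctrine_def by blast

lemma rx_commuting_square: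
  assumes "g \<cdot> f = g' \<cdot> f'" "ccod C f = cdom C g" "ccod C f' = cdom C g'" "ccod C g' = ccod C g"
    and "x \<in> Pc (ccod C g)"
  shows "rx f (rx g x) = rx f' (rx g' x)"
  using assms rx_comp[of f g x] rx_comp[of f' g' x] by simp

abbreviation raw :: "'o \<Rightarrow> ('o \<times> 'e) set" where
  "raw \<equiv> un_raw C Pc"

abbreviation pre :: "'o \<Rightarrow> 'o \<times> 'e \<Rightarrow> 'o \<times> 'e \<Rightarrow> bool" where
  "pre \<equiv> un_pre C le rx"

lemma mem_un_raw_iff [simp]: "(B, \<alpha>) \<in> raw A \<longleftrightarrow> \<alpha> \<in> Pc (A \<times>\<^sub>c B)"
  by (simp add: un_raw_def)

lemma un_pre_iff:
  "pre A (B, \<alpha>) (D, \<delta>) \<longleftrightarrow>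
     (\<exists>g. cdom C g = A \<times>\<^sub>c D \<and> ccod C g = B \<and> le (A \<times>\<^sub>c D) (rx \<langle>p\<^sub>1 A D, g\<rangle> \<alpha>) \<delta>)"
  by (simp add: un_pre_def)

lemma un_pre_preorder: "carrier_preorder (raw A) (pre A)"
proof
  fix x assume "x \<in> raw A"
  then obtain B \<alpha> where x: "x = (B, \<alpha>)" "\<alpha> \<in> Pc (A \<times>\<^sub>c B)" by (cases x) auto
  then show "pre A x x"
    unfolding x(1) un_pre_iff using x(2) by (intro exI[of _ "p\<^sub>2 A B"]) (simp add: pair_proj rx_id le_refl)
next
  fix x y z assume "x \<in> raw A" "y \<in> raw A" "z \<in> raw A" "pre A x y" "pre A y z"
  then obtain B \<alpha> B' \<beta> D \<delta> where xyz: "x = (B, \<alpha>)" "y = (B', \<beta>)" "z = (D, \<delta>)"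
    and mem: "\<alpha> \<in> Pc (A \<times>\<^sub>c B)" "\<beta> \<in> Pc (A \<times>\<^sub>c B')" "\<delta> \<in> Pc (A \<times>\<^sub>c D)"
    and "pre A (B, \<alpha>) (B', \<beta>)" "pre A (B', \<beta>) (D, \<delta>)"
    by (cases x, cases y, cases z) auto
  then obtain g h where g: "cdom C g = A \<times>\<^sub>c B'" "ccod C g = B" "le (A \<times>\<^sub>c B') (rx \<langle>p\<^sub>1 A B', g\<rangle> \<alpha>) \<beta>"
    and h: "cdom C h = A \<times>\<^sub>c D" "ccod C h = B'" "le (A \<times>\<^sub>c D) (rx \<langle>p\<^sub>1 A D, h\<rangle> \<beta>) \<delta>"
    by (auto simp: un_pre_iff)
  let ?g = "\<langle>p\<^sub>1 A B', g\<rangle>" and ?h = "\<langle>p\<^sub>1 A D, h\<rangle>"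
  have "rx \<langle>p\<^sub>1 A D, g \<cdot> ?h\<rangle> \<alpha> = rx ?h (rx ?g \<alpha>)"
    using g h mem rx_comp[of ?h ?g \<alpha>] by simp
  moreover have "le (A \<times>\<^sub>c D) (rx ?h (rx ?g \<alpha>)) (rx ?h \<beta>)"
    using g h mem rx_mono[of "rx ?g \<alpha>" ?h \<beta>] rx_closed[of \<alpha> ?g] by simp
  moreover have "rx ?h (rx ?g \<alpha>) \<in> Pc (A \<times>\<^sub>c D)" "rx ?h \<beta> \<in> Pc (A \<times>\<^sub>c D)"
    using g h mem rx_closed[of "rx ?g \<alpha>" ?h] rx_closed[of \<alpha> ?g] rx_closed[of \<beta> ?h] by simp_all
  ultimately have "le (A \<times>\<^sub>c D) (rx \<langle>p\<^sub>1 A D, g \<cdot> ?h\<rangle> \<alpha>) \<delta>"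
    using le_trans h(3) mem by metis
  then show "pre A x z"
    unfolding xyz un_pre_iff using g h by (intro exI[of _ "g \<cdot> ?h"]) simp
qed

definition un_reindex :: "'a \<Rightarrow> 'o \<times> 'e \<Rightarrow> 'o \<times> 'e" where
  "un_reindex f = (\<lambda>(D, \<gamma>). (D, rx (ctimes_id C f D) \<gamma>))"

lemma un_reindex_image_subset: "un_reindex f ` raw (ccod C f) \<subseteq> raw (cdom C f)"
proof
  fix x assume "x \<in> un_reindex f ` raw (ccod C f)"
  then show "x \<in> raw (cdom C f)"
    using rx_closed[of _ "ctimes_id C f _"] by (auto simp: un_reindex_def)
qed

lemma un_reindex_mono:
  assumes "x \<in> raw (ccod C f)" "y \<in> raw (ccod C f)" "pre (ccod C f) x y"
  shows "pre (cdom C f) (un_reindex f x) (un_reindex f y)"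
proof -
  obtain B \<alpha> D \<beta> where xy: "x = (B, \<alpha>)" "y = (D, \<beta>)"
    and mem: "\<alpha> \<in> Pc (ccod C f \<times>\<^sub>c B)" "\<beta> \<in> Pc (ccod C f \<times>\<^sub>c D)"
    using assms(1,2) by (cases x, cases y) auto
  then obtain g where g: "cdom C g = ccod C f \<times>\<^sub>c D" "ccod C g = B"
    "le (ccod C f \<times>\<^sub>c D) (rx \<langle>p\<^sub>1 (ccod C f) D, g\<rangle> \<alpha>) \<beta>"
    using assms(3) by (auto simp: un_pre_iff)
  let ?g = "\<langle>p\<^sub>1 (ccod C f) D, g\<rangle>" and ?h = "\<langle>p\<^sub>1 (cdom C f) D, g \<cdot> ctimes_id C f D\<rangle>"
  have "rx ?h (rx (ctimes_id C f B) \<alpha>) = rx (ctimes_id C f D) (rx ?g \<alpha>)"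
    using g mem by (intro rx_commuting_square) (simp_all add: ctimes_id_def)
  moreover have "le (cdom C f \<times>\<^sub>c D) (rx (ctimes_id C f D) (rx ?g \<alpha>)) (rx (ctimes_id C f D) \<beta>)"
    using g mem rx_mono[of "rx ?g \<alpha>" "ctimes_id C f D" \<beta>] rx_closed[of \<alpha> ?g] by simp
  ultimately have "pre (cdom C f) (B, rx (ctimes_id C f B) \<alpha>) (D, rx (ctimes_id C f D) \<beta>)"
    unfolding un_pre_iff using g by (intro exI[of _ "g \<cdot> ctimes_id C f D"]) simp
  then show ?thesis
    by (simp add: xy un_reindex_def)
qed


lemma un_reindex_is_lub_cong:
  assumes "T \<subseteq> raw (ccod C f)"
    and "is_lub (raw (ccod C f)) (pre (ccod C f)) T j" "is_lub (raw (ccod C f)) (pre (ccod C f)) T j'"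
    and "is_lub (raw (cdom C f)) (pre (cdom C f)) (un_reindex f ` T) (un_reindex f j')"
  shows "is_lub (raw (cdom C f)) (pre (cdom C f)) (un_reindex f ` T) (un_reindex f j)"
  using monotone_is_lub_cong[where R = "pre (ccod C f)", OF un_pre_preorder un_reindex_mono
      un_reindex_image_subset] assms by blast

lemma Pun_eq_reflection: "Pun C Pc le rx A = reflection_class (raw A) (pre A) ` raw A"
proof -
  have "un_class C Pc le rx A = reflection_class (raw A) (pre A)"
    by (simp add: fun_eq_iff un_class_def reflection_class_def un_equiv_def)
  then show ?thesis
    by (simp add: Pun_def)
qed

lemma Pun_le_eq_reflection_le: "Pun_le C le rx A = reflection_le (pre A)"
  by (simp add: fun_eq_iff Pun_le_def reflection_le_def)

lemma Pun_map_reflection_class: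
  assumes "x \<in> raw (ccod C f)"
  shows "Pun_map C Pc le rx f (reflection_class (raw (ccod C f)) (pre (ccod C f)) x)
       = reflection_class (raw (cdom C f)) (pre (cdom C f)) (un_reindex f x)"
proof -
  have "Pun_map C Pc le rx f Y = {z \<in> raw (cdom C f). \<exists>y\<in>Y.
          pre (cdom C f) (un_reindex f y) z \<and> pre (cdom C f) z (un_reindex f y)}" for Y
    by (simp add: Pun_map_def un_equiv_def un_reindex_def case_prod_beta)
  then show ?thesis
    using reflection_class_of_image[OF un_pre_preorder un_pre_preorder un_reindex_mono
        un_reindex_image_subset assms] by simp
qed

end

locale finite_join_doctrine = slat_doctrine +
  assumes fibre_joins: "\<forall>A. has_finite_joins (Pc A) (le A)"
    and rx_preserves_joins: "\<forall>f. preserves_finite_joins (Pc (ccod C f)) (le (ccod C f))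
                                  (Pc (cdom C f)) (le (cdom C f)) (rx f)"
begin

lemma ex_fibre_lub: "finite S \<Longrightarrow> S \<subseteq> Pc A \<Longrightarrow> \<exists>j. is_lub (Pc A) (le A) S j"
  using fibre_joins unfolding has_finite_joins_def by blast

lemma rx_is_lub:
  "finite S \<Longrightarrow> S \<subseteq> Pc (ccod C f) \<Longrightarrow> is_lub (Pc (ccod C f)) (le (ccod C f)) S j
   \<Longrightarrow> is_lub (Pc (cdom C f)) (le (cdom C f)) (rx f ` S) (rx f j)"
  using rx_preserves_joins unfolding preserves_finite_joins_def by blast

lemma un_bottom:
  assumes e: "is_lub (Pc (A \<times>\<^sub>c cterm C)) (le (A \<times>\<^sub>c cterm C)) {} e"
  shows "is_lub (raw A) (pre A) {} (cterm C, e)"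
  unfolding is_lub_def
proof (intro conjI ballI impI)
  show "(cterm C, e) \<in> raw A"
    using e by (simp add: is_lub_def)
next
  fix u assume "u \<in> raw A"
  then obtain D \<delta> where u: "u = (D, \<delta>)" "\<delta> \<in> Pc (A \<times>\<^sub>c D)"
    by (cases u) auto
  obtain t where t: "cdom C t = A \<times>\<^sub>c D" "ccod C t = cterm C"
    using ex_to_terminal by blast
  have "is_lub (Pc (A \<times>\<^sub>c D)) (le (A \<times>\<^sub>c D)) {} (rx \<langle>p\<^sub>1 A D, t\<rangle> e)"
    using rx_is_lub[of "{}" "\<langle>p\<^sub>1 A D, t\<rangle>" e] e t by simp
  then have "le (A \<times>\<^sub>c D) (rx \<langle>p\<^sub>1 A D, t\<rangle> e) \<delta>"
    using u by (simp add: is_lub_def)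
  then show "pre A (cterm C, e) u"
    unfolding u un_pre_iff using t by blast
qed simp

lemma un_binary_join:
  assumes \<alpha>: "\<alpha> \<in> Pc (A \<times>\<^sub>c B)" and \<beta>: "\<beta> \<in> Pc (A \<times>\<^sub>c D)"
    and \<gamma>: "is_lub (Pc (A \<times>\<^sub>c B \<times>\<^sub>c D)) (le (A \<times>\<^sub>c B \<times>\<^sub>c D))
               {rx (id_times_fst A B D) \<alpha>, rx (id_times_snd A B D) \<beta>} \<gamma>"
  shows "is_lub (raw A) (pre A) {(B, \<alpha>), (D, \<beta>)} (B \<times>\<^sub>c D, \<gamma>)"
  unfolding is_lub_def
proof (intro conjI ballI impI)
  show "(B \<times>\<^sub>c D, \<gamma>) \<in> raw A"
    using \<gamma> by (simp add: is_lub_def)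
  have "pre A (B, \<alpha>) (B \<times>\<^sub>c D, \<gamma>)"
    unfolding un_pre_iff using \<gamma>
    by (intro exI[of _ "p\<^sub>1 B D \<cdot> p\<^sub>2 A (B \<times>\<^sub>c D)"]) (simp add: is_lub_def id_times_fst_def)
  moreover have "pre A (D, \<beta>) (B \<times>\<^sub>c D, \<gamma>)"
    unfolding un_pre_iff using \<gamma>
    by (intro exI[of _ "p\<^sub>2 B D \<cdot> p\<^sub>2 A (B \<times>\<^sub>c D)"]) (simp add: is_lub_def id_times_snd_def)
  ultimately show "pre A x (B \<times>\<^sub>c D, \<gamma>)" if "x \<in> {(B, \<alpha>), (D, \<beta>)}" for x
    using that by blast
next
  fix u assume "u \<in> raw A" and ub: "\<forall>x\<in>{(B, \<alpha>), (D, \<beta>)}. pre A x u"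
  then obtain E \<delta> where u: "u = (E, \<delta>)" "\<delta> \<in> Pc (A \<times>\<^sub>c E)"
    by (cases u) auto
  obtain g\<^sub>1 g\<^sub>2
    where g\<^sub>1: "cdom C g\<^sub>1 = A \<times>\<^sub>c E" "ccod C g\<^sub>1 = B" "le (A \<times>\<^sub>c E) (rx \<langle>p\<^sub>1 A E, g\<^sub>1\<rangle> \<alpha>) \<delta>"
      and g\<^sub>2: "cdom C g\<^sub>2 = A \<times>\<^sub>c E" "ccod C g\<^sub>2 = D" "le (A \<times>\<^sub>c E) (rx \<langle>p\<^sub>1 A E, g\<^sub>2\<rangle> \<beta>) \<delta>"
    using ub u by (auto simp: un_pre_iff)
  let ?h = "\<langle>p\<^sub>1 A E, \<langle>g\<^sub>1, g\<^sub>2\<rangle>\<rangle>"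
  have "rx ?h (rx (id_times_fst A B D) \<alpha>) = rx \<langle>p\<^sub>1 A E, g\<^sub>1\<rangle> \<alpha>"
    using g\<^sub>1 g\<^sub>2 \<alpha> rx_comp[of ?h "id_times_fst A B D" \<alpha>] by (simp add: id_times_fst_def)
  moreover have "rx ?h (rx (id_times_snd A B D) \<beta>) = rx \<langle>p\<^sub>1 A E, g\<^sub>2\<rangle> \<beta>"
    using g\<^sub>1 g\<^sub>2 \<beta> rx_comp[of ?h "id_times_snd A B D" \<beta>] by (simp add: id_times_snd_def)
  moreover have "is_lub (Pc (A \<times>\<^sub>c E)) (le (A \<times>\<^sub>c E))
      (rx ?h ` {rx (id_times_fst A B D) \<alpha>, rx (id_times_snd A B D) \<beta>}) (rx ?h \<gamma>)"
    using g\<^sub>1 g\<^sub>2 \<alpha> \<beta> \<gamma> rx_closed[of \<alpha> "id_times_fst A B D"] rx_closed[of \<beta> "id_times_snd A B D"]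
      rx_is_lub[of "{rx (id_times_fst A B D) \<alpha>, rx (id_times_snd A B D) \<beta>}" ?h \<gamma>] by simp
  ultimately have "le (A \<times>\<^sub>c E) (rx ?h \<gamma>) \<delta>"
    using g\<^sub>1(3) g\<^sub>2(3) u(2) by (simp add: is_lub_def)
  then show "pre A (B \<times>\<^sub>c D, \<gamma>) u"
    unfolding u un_pre_iff using g\<^sub>1 g\<^sub>2 by (intro exI[of _ "\<langle>g\<^sub>1, g\<^sub>2\<rangle>"]) simp
qed

lemma ex_un_binary_join:
  assumes "\<alpha> \<in> Pc (A \<times>\<^sub>c B)" "\<beta> \<in> Pc (A \<times>\<^sub>c D)"
  shows "\<exists>\<gamma>. is_lub (Pc (A \<times>\<^sub>c B \<times>\<^sub>c D)) (le (A \<times>\<^sub>c B \<times>\<^sub>c D))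
               {rx (id_times_fst A B D) \<alpha>, rx (id_times_snd A B D) \<beta>} \<gamma>"
  using assms rx_closed[of \<alpha> "id_times_fst A B D"] rx_closed[of \<beta> "id_times_snd A B D"]
  by (intro ex_fibre_lub) auto

lemma un_raw_has_finite_joins: "has_finite_joins (raw A) (pre A)"
proof (rule carrier_preorder.has_finite_joinsI[OF un_pre_preorder])
  obtain e where "is_lub (Pc (A \<times>\<^sub>c cterm C)) (le (A \<times>\<^sub>c cterm C)) {} e"
    using ex_fibre_lub[of "{}"] by blast
  then show "\<exists>b. is_lub (raw A) (pre A) {} b"
    using un_bottom by blast
next
  fix a c assume "a \<in> raw A" "c \<in> raw A"
  then obtain B \<alpha> D \<beta> where "a = (B, \<alpha>)" "c = (D, \<beta>)" "\<alpha> \<in> Pc (A \<times>\<^sub>c B)" "\<beta> \<in> Pc (A \<times>\<^sub>c D)"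
    by (cases a, cases c) auto
  then show "\<exists>j. is_lub (raw A) (pre A) {a, c} j"
    using ex_un_binary_join un_binary_join by blast
qed

lemma un_reindex_bottom:
  assumes b: "is_lub (raw (ccod C f)) (pre (ccod C f)) {} b"
  shows "is_lub (raw (cdom C f)) (pre (cdom C f)) {} (un_reindex f b)"
proof -
  obtain e where e: "is_lub (Pc (ccod C f \<times>\<^sub>c cterm C)) (le (ccod C f \<times>\<^sub>c cterm C)) {} e"
    using ex_fibre_lub[of "{}"] by blast
  have "is_lub (Pc (cdom C f \<times>\<^sub>c cterm C)) (le (cdom C f \<times>\<^sub>c cterm C)) {}
      (rx (ctimes_id C f (cterm C)) e)"
    using rx_is_lub[of "{}" "ctimes_id C f (cterm C)" e] e by simp
  then have "is_lub (raw (cdom C f)) (pre (cdom C f)) {} (un_reindex f (cterm C, e))"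
    unfolding un_reindex_def by (simp add: un_bottom)
  then show ?thesis
    using un_reindex_is_lub_cong[of "{}" f b "(cterm C, e)"] b un_bottom[OF e] by simp
qed

lemma un_reindex_canonical_binary_join:
  assumes \<alpha>: "\<alpha> \<in> Pc (ccod C f \<times>\<^sub>c B)" and \<beta>: "\<beta> \<in> Pc (ccod C f \<times>\<^sub>c D)"
    and \<gamma>: "is_lub (Pc (ccod C f \<times>\<^sub>c B \<times>\<^sub>c D)) (le (ccod C f \<times>\<^sub>c B \<times>\<^sub>c D))
               {rx (id_times_fst (ccod C f) B D) \<alpha>, rx (id_times_snd (ccod C f) B D) \<beta>} \<gamma>"
  shows "is_lub (raw (cdom C f)) (pre (cdom C f))
           {un_reindex f (B, \<alpha>), un_reindex f (D, \<beta>)} (un_reindex f (B \<times>\<^sub>c D, \<gamma>))"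
proof -
  let ?t = "ctimes_id C f" and ?fst = "id_times_fst (ccod C f) B D" and ?snd = "id_times_snd (ccod C f) B D"
  have "rx (?t (B \<times>\<^sub>c D)) (rx ?fst \<alpha>) = rx (id_times_fst (cdom C f) B D) (rx (?t B) \<alpha>)"
    using \<alpha> by (intro rx_commuting_square id_times_fst_natural) simp_all
  moreover have "rx (?t (B \<times>\<^sub>c D)) (rx ?snd \<beta>) = rx (id_times_snd (cdom C f) B D) (rx (?t D) \<beta>)"
    using \<beta> by (intro rx_commuting_square id_times_snd_natural) simp_all
  moreover have "is_lub (Pc (cdom C f \<times>\<^sub>c B \<times>\<^sub>c D)) (le (cdom C f \<times>\<^sub>c B \<times>\<^sub>c D))
      (rx (?t (B \<times>\<^sub>c D)) ` {rx ?fst \<alpha>, rx ?snd \<beta>}) (rx (?t (B \<times>\<^sub>c D)) \<gamma>)"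
    using \<alpha> \<beta> \<gamma> rx_closed[of \<alpha> ?fst] rx_closed[of \<beta> ?snd]
      rx_is_lub[of "{rx ?fst \<alpha>, rx ?snd \<beta>}" "?t (B \<times>\<^sub>c D)" \<gamma>]
    by simp
  ultimately show ?thesis
    using \<alpha> \<beta> rx_closed[of \<alpha> "?t B"] rx_closed[of \<beta> "?t D"]
    by (simp add: un_reindex_def un_binary_join)
qed

lemma un_reindex_binary_join:
  assumes "a \<in> raw (ccod C f)" "c \<in> raw (ccod C f)"
    and j: "is_lub (raw (ccod C f)) (pre (ccod C f)) {a, c} j"
  shows "is_lub (raw (cdom C f)) (pre (cdom C f)) {un_reindex f a, un_reindex f c} (un_reindex f j)"
proof -
  obtain B \<alpha> D \<beta> where ac: "a = (B, \<alpha>)" "c = (D, \<beta>)"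
    and \<alpha>: "\<alpha> \<in> Pc (ccod C f \<times>\<^sub>c B)" and \<beta>: "\<beta> \<in> Pc (ccod C f \<times>\<^sub>c D)"
    using assms(1,2) by (cases a, cases c) auto
  obtain \<gamma> where \<gamma>: "is_lub (Pc (ccod C f \<times>\<^sub>c B \<times>\<^sub>c D)) (le (ccod C f \<times>\<^sub>c B \<times>\<^sub>c D))
      {rx (id_times_fst (ccod C f) B D) \<alpha>, rx (id_times_snd (ccod C f) B D) \<beta>} \<gamma>"
    using ex_un_binary_join[OF \<alpha> \<beta>] by blast
  show ?thesis
    using un_reindex_is_lub_cong[of "{a, c}" f j "(B \<times>\<^sub>c D, \<gamma>)"] j \<alpha> \<beta> ac
      un_binary_join[OF \<alpha> \<beta> \<gamma>] un_reindex_canonical_binary_join[OF \<alpha> \<beta> \<gamma>]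
    by simp
qed

lemma un_reindex_preserves_finite_joins:
  "preserves_finite_joins (raw (ccod C f)) (pre (ccod C f)) (raw (cdom C f)) (pre (cdom C f)) (un_reindex f)"
  using un_reindex_image_subset un_reindex_bottom un_reindex_binary_join
  by (rule preserves_finite_joinsI[OF un_pre_preorder un_pre_preorder un_raw_has_finite_joins])

end

theorem proposition3:
  fixes C :: "('o, 'a) fpcat"
    and Pc :: "'o \<Rightarrow> 'e set"
    and le :: "'o \<Rightarrow> 'e \<Rightarrow> 'e \<Rightarrow> bool"
    and rx :: "'a \<Rightarrow> 'e \<Rightarrow> 'e"
  assumes "is_fp_category C"
    and "is_doctrine C Pc le rx"
    and "\<forall>A. has_finite_joins (Pc A) (le A)"
    and "\<forall>f. preserves_finite_joins (Pc (ccod C f)) (le (ccod C f))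
                                    (Pc (cdom C f)) (le (cdom C f)) (rx f)"
  shows "(\<forall>A. has_finite_joins (Pun C Pc le rx A) (Pun_le C le rx A))
       \<and> (\<forall>f. preserves_finite_joins (Pun C Pc le rx (ccod C f)) (Pun_le C le rx (ccod C f))
                 (Pun C Pc le rx (cdom C f)) (Pun_le C le rx (cdom C f)) (Pun_map C Pc le rx f))"
proof -
  interpret finite_join_doctrine C Pc le rx
    using assms by unfold_locales
  show ?thesis
    unfolding Pun_eq_reflection Pun_le_eq_reflection_le
  proof (intro conjI allI)
    fix A
    show "has_finite_joins (reflection_class (raw A) (pre A) ` raw A) (reflection_le (pre A))"
      by (rule carrier_preorder.has_finite_joins_reflection[OF un_pre_preorder un_raw_has_finite_joins])
  next
    fix f
    show "preserves_finite_joins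
            (reflection_class (raw (ccod C f)) (pre (ccod C f)) ` raw (ccod C f)) (reflection_le (pre (ccod C f)))
            (reflection_class (raw (cdom C f)) (pre (cdom C f)) ` raw (cdom C f)) (reflection_le (pre (cdom C f)))
            (Pun_map C Pc le rx f)"
      by (rule preserves_finite_joins_reflection[OF un_pre_preorder un_pre_preorder
            un_reindex_preserves_finite_joins un_reindex_image_subset Pun_map_reflection_class])
  qed
qed

end
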